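(* Let $p$ be a prime, let $r,s$ be positive integers with $r\le s$, and let $m\ge 0$ be the smallest integer with $r\leq p^m$. Then $\lambda(r,s,p)$ is the uniform partition $(s,s,\dots,s)$ (equivalently the deviation vector $\varepsilon(r,s,p)$ equals $(0,\dots,0)$) if and only if $s\equiv 0\pmod{p^m}$.
   Context: For a positive integer $n$, let $J_n$ denote the $n\times n$ matrix with $1$s in positions $(i,i)$ for $1\le i\le n$ and $(i,i+1)$ for $1\le i<n$, and $0$s elsewhere. For $1\le r\le s$ and a field $F$ of characteristic $p$, the Jordan canonical form of $J_r\otimes J_s$ over $F$ is $J_{\lambda_1}\oplus\cdots\oplus J_{\lambda_r}$ with $\lambda_1\ge\cdots\ge\lambda_r>0$; write $\lambda(r,s,p)=(\lambda_1,\dots,\lambda_r)$ (a partition of $rs$ depending only on $r,s,p$). The deviation vector is $\varepsilon(r,s,p)=(\lambda_1-s,\dots,\lambda_r-s)$. *)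

theory Defs
  imports "Jordan_Normal_Form.Jordan_Normal_Form"
begin

definition kron_mat :: "'a :: times mat \<Rightarrow> 'a mat \<Rightarrow> 'a mat" where
  "kron_mat A B = mat (dim_row A * dim_row B) (dim_col A * dim_col B)
     (\<lambda>(i,j). A $$ (i div dim_row B, j div dim_col B) * B $$ (i mod dim_row B, j mod dim_col B))"

end

theory Submission
  imports
    Defs
    "Jordan_Normal_Form.Jordan_Normal_Form_Uniqueness"
    "HOL-Computational_Algebra.Primes"
begin

text \<open>
  Identify F^r \<otimes> F^s with the truncated polynomials F[x, y] / (x^r, y^s). Then J_r \<otimes> J_s acts
  as multiplication by (1 + x)(1 + y), and N = J_r \<otimes> J_s - 1 as multiplication by
  Z = (1 + x)(1 + y) - 1 = x + (1 + x) y. The coefficient of y^g x^f in Z^s x^e is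
  binom(s, g) binom(g, f - (s - g + e)), which vanishes unless s - g \<le> f.

  Let p^m be the least power of p with r \<le> p^m. If p^m divides s, then p divides binom(s, g) whenever
  0 < s - g < p^m, so each Z^s x^e vanishes in the truncation; hence the vectors Z^t x^e (t < s, e < r)
  form r Jordan chains of length s, and they give a unitriangular change of basis. Otherwise
  s = p^j u with p not dividing u and p^j < r; then the coefficient binom(s, p^j), congruent to u
  modulo p, of y^(s - p^j) x^(p^j) in Z^s survives the truncation, so N^s \<noteq> 0 and there is a Jordan
  block longer than s.
\<close>

lemma prime_dvd_binomial_if_prime_power_dvd:
  fixes p m n k :: nat
  assumes "prime p" and "p ^ m dvd n" and "0 < k" and "k < p ^ m"
  shows "p dvd n choose k"
proof (rule ccontr)
  assume "\<not> p dvd n choose k"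
  then have "coprime (p ^ m) (n choose k)"
    using assms(1) by (simp add: prime_imp_coprime)
  moreover have "p ^ m dvd k * (n choose k)"
    using assms(2,3) by (simp add: times_binomial_minus1_eq)
  ultimately have "p ^ m dvd k"
    by (simp add: coprime_dvd_mult_left_iff)
  with assms(3,4) show False
    by (simp add: nat_dvd_not_less)
qed

lemma coeff_one_plus_X_power: "coeff ([:1, 1:] ^ n :: 'a::comm_semiring_1 poly) k = of_nat (n choose k)"
proof (cases "k \<le> n")
  case True
  then show ?thesis by (simp add: coeff_linear_poly_power)
next
  case False
  then show ?thesis by (simp add: coeff_eq_0 degree_linear_power binomial_eq_0)
qed

lemma coeff_one_plus_X_mult:
  "coeff ([:1, 1:] * (q :: 'a::comm_semiring_1 poly)) n = coeff q n + (if n = 0 then 0 else coeff q (n - 1))"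
  by (cases n) (simp_all add: coeff_pCons)

lemma of_nat_binomial_prime_power_mult:
  assumes "prime CHAR('a::comm_ring_1)" and "q = CHAR('a) ^ j"
  shows "of_nat ((q * u) choose q) = (of_nat u :: 'a)"
proof -
  have q: "q > 0"
    using assms by (simp add: prime_gt_0_nat)
  have "[:1, 1:] ^ q = (1 + monom 1 1 :: 'a poly) ^ q"
    by (simp add: monom_altdef one_pCons)
  also have "\<dots> = 1 + monom 1 q"
    using assms by (simp add: freshmans_dream' monom_power)
  finally have "[:1, 1:] ^ (q * u) = (monom 1 q + 1 :: 'a poly) ^ u"
    by (simp add: power_mult add.commute)
  also have "\<dots> = (\<Sum>k\<le>u. monom (of_nat (u choose k)) (q * k))"
    by (simp add: binomial_ring monom_power of_nat_poly smult_monom flip: monom_altdef)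
  finally have "coeff ([:1, 1:] ^ (q * u) :: 'a poly) q =
      (\<Sum>k\<le>u. if k = 1 then of_nat (u choose k) else 0)"
    using q by (simp add: coeff_sum)
  then show ?thesis
    using q by (cases u) (simp_all add: coeff_one_plus_X_power binomial_eq_0)
qed

lemma prime_power_part_less_if_not_dvd:
  fixes p r s :: nat
  assumes "prime p" and "s \<noteq> 0" and "\<not> p ^ (LEAST m. r \<le> p ^ m) dvd s"
  shows "\<exists>j u. s = p ^ j * u \<and> \<not> p dvd u \<and> p ^ j < r"
proof -
  have p: "\<not> is_unit p"
    using assms(1) by (simp add: prime_nat_iff)
  obtain u where u: "s = p ^ multiplicity p s * u" "\<not> p dvd u"
    using multiplicity_decompose'[OF assms(2) p] by blast
  have "multiplicity p s < (LEAST m. r \<le> p ^ m)"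
    using assms(3) power_dvd_iff_le_multiplicity[OF assms(2) p] by (meson not_le)
  then have "\<not> r \<le> p ^ multiplicity p s"
    by (rule not_less_Least)
  with u show ?thesis
    by (metis not_le)
qed

lemma le_prime_power_Least:
  fixes p r :: nat
  assumes "prime p"
  shows "r \<le> p ^ (LEAST m. r \<le> p ^ m)"
proof (rule LeastI_ex)
  have "r < 2 ^ r"
    by (rule less_exp)
  also have "\<dots> \<le> p ^ r"
    using prime_ge_2_nat[OF assms] by (simp add: power_mono)
  finally show "\<exists>m. r \<le> p ^ m"
    by (auto intro: less_imp_le)
qed

lemma mult_add_less_mult:
  fixes a b m n :: nat
  assumes "a < m" and "b < n"
  shows "a * n + b < m * n"
proof -
  have "a * n + b < Suc a * n"
    using assms(2) by simp
  also have "\<dots> \<le> m * n"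
    using assms(1) by (intro mult_le_mono1) simp
  finally show ?thesis .
qed

lemma div_mod_less_if_less_mult:
  fixes i r s :: nat
  shows "i < r * s \<Longrightarrow> i div s < r \<and> i mod s < s"
  by (cases "s = 0") (auto simp: less_mult_imp_div_less)

lemma div_eq_and_Suc_mod_eq_iff:
  fixes l c s :: nat
  assumes "0 < s"
  shows "l div s = c div s \<and> Suc (l mod s) = c mod s \<longleftrightarrow> Suc l = c \<and> c mod s \<noteq> 0"
proof
  assume "l div s = c div s \<and> Suc (l mod s) = c mod s"
  then show "Suc l = c \<and> c mod s \<noteq> 0"
    by (metis add_Suc_right div_mult_mod_eq nat.distinct(1))
next
  assume "Suc l = c \<and> c mod s \<noteq> 0"
  then show "l div s = c div s \<and> Suc (l mod s) = c mod s"
    by (auto simp: mod_Suc div_Suc split: if_splits)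
qed

lemma sum_lessThan_mult_split:
  fixes r s :: nat
  shows "(\<Sum>j<r * s. f j) = (\<Sum>a<r. \<Sum>b<s. f (a * s + b))"
proof (induction r)
  case (Suc r)
  have "(\<Sum>j<Suc r * s. f j) = (\<Sum>j<r * s. f j) + sum f {r * s..<r * s + s}"
    by (subst sum.union_disjoint[symmetric]) (auto intro!: sum.cong)
  also have "sum f {r * s..<r * s + s} = (\<Sum>b<s. f (r * s + b))"
    by (simp add: sum.shift_bounds_nat_ivl[where k="r * s" and m=0, simplified] lessThan_atLeast0 add.commute)
  finally show ?case
    using Suc by simp
qed simp

section \<open>Kronecker products and Jordan matrices\<close>

lemma dim_kron_mat [simp]:
  "dim_row (kron_mat A B) = dim_row A * dim_row B" "dim_col (kron_mat A B) = dim_col A * dim_col B"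
  by (simp_all add: kron_mat_def)

lemma kron_mat_carrier [simp]:
  assumes "A \<in> carrier_mat m r" and "B \<in> carrier_mat n s"
  shows "kron_mat A B \<in> carrier_mat (m * n) (r * s)"
  using assms by (intro carrier_matI) auto

lemma index_kron_mat [simp]:
  assumes "i < dim_row A * dim_row B" and "j < dim_col A * dim_col B"
  shows "kron_mat A B $$ (i, j) =
    A $$ (i div dim_row B, j div dim_col B) * B $$ (i mod dim_row B, j mod dim_col B)"
  using assms by (simp add: kron_mat_def)

lemma kron_mat_mult_vec_index:
  assumes "A \<in> carrier_mat m r" and "B \<in> carrier_mat n s" and "a < m" and "b < n"
  shows "(kron_mat A B *\<^sub>v vec (r * s) (\<lambda>j. v (j div s) (j mod s))) $ (a * n + b) =
    (\<Sum>a'<r. A $$ (a, a') * (\<Sum>b'<s. B $$ (b, b') * v a' b'))"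
proof -
  have i: "a * n + b < m * n"
    using assms(3,4) by (rule mult_add_less_mult)
  have "(kron_mat A B *\<^sub>v vec (r * s) (\<lambda>j. v (j div s) (j mod s))) $ (a * n + b) =
      (\<Sum>j<r * s. kron_mat A B $$ (a * n + b, j) * v (j div s) (j mod s))"
    using assms i by (simp add: kron_mat_def scalar_prod_def lessThan_atLeast0)
  also have "\<dots> = (\<Sum>a'<r. \<Sum>b'<s. kron_mat A B $$ (a * n + b, a' * s + b') * v a' b')"
    by (simp add: sum_lessThan_mult_split)
  also have "\<dots> = (\<Sum>a'<r. \<Sum>b'<s. A $$ (a, a') * (B $$ (b, b') * v a' b'))"
  proof (intro sum.cong refl)
    fix a' b' assume "a' \<in> {..<r}" and b': "b' \<in> {..<s}"
    then have "a' * s + b' < r * s"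
      by (simp add: mult_add_less_mult)
    then show "kron_mat A B $$ (a * n + b, a' * s + b') * v a' b' = A $$ (a, a') * (B $$ (b, b') * v a' b')"
      using assms i b' by (simp add: kron_mat_def mult.assoc)
  qed
  finally show ?thesis
    by (simp add: sum_distrib_left)
qed

lemma jordan_block_1_row_sum:
  assumes "a < n"
  shows "(\<Sum>a'<n. jordan_block n (1::'a::comm_ring_1) $$ (a, a') * h a') =
    h a + (if Suc a < n then h (Suc a) else 0)"
proof -
  have "(\<Sum>a'<n. jordan_block n (1::'a) $$ (a, a') * h a') =
      (\<Sum>a'<n. (if a' = a then h a' else 0) + (if a' = Suc a then h a' else 0))"
    using assms by (intro sum.cong) auto
  also have "\<dots> = h a + (if Suc a < n then h (Suc a) else 0)"
    using assms by (simp add: sum.distrib)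
  finally show ?thesis .
qed

lemma diag_block_mat_replicate:
  fixes B :: "'a::semiring_1 mat"
  assumes "B \<in> carrier_mat s s"
  shows "diag_block_mat (replicate r B) = kron_mat (1\<^sub>m r) B"
proof (induction r)
  case 0
  show ?case
    by (rule eq_matI) simp_all
next
  case (Suc r)
  have D: "kron_mat (1\<^sub>m r) B \<in> carrier_mat (r * s) (r * s)"
    using assms by simp
  have "diag_block_mat (replicate (Suc r) B) =
      four_block_mat B (0\<^sub>m s (r * s)) (0\<^sub>m (r * s) s) (kron_mat (1\<^sub>m r) B)"
    using assms D Suc by (simp add: Let_def)
  also have "\<dots> = kron_mat (1\<^sub>m (Suc r)) B"
  proof (rule eq_matI)
    fix i j assume "i < dim_row (kron_mat (1\<^sub>m (Suc r)) B)" "j < dim_col (kron_mat (1\<^sub>m (Suc r)) B)"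
    then have ij: "i < Suc r * s" "j < Suc r * s"
      using assms by auto
    then have s: "s > 0"
      by (cases s) auto
    have shift: "k \<ge> s \<Longrightarrow> k div s = Suc ((k - s) div s) \<and> k mod s = (k - s) mod s" for k
      using s by (simp add: le_div_geq le_mod_geq)
    have dims: "dim_row B = s" "dim_col B = s"
      using assms by auto
    have divs: "i div s < Suc r" "j div s < Suc r"
      using ij by (simp_all add: less_mult_imp_div_less)
    consider "i < s" "j < s" | "i < s" "s \<le> j" | "s \<le> i" "j < s" | "s \<le> i" "s \<le> j"
      by linarith
    then show "four_block_mat B (0\<^sub>m s (r * s)) (0\<^sub>m (r * s) s) (kron_mat (1\<^sub>m r) B) $$ (i, j) =
        kron_mat (1\<^sub>m (Suc r)) B $$ (i, j)"
    proof cases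
      case 4
      then have "i - s < r * s" "j - s < r * s"
        using ij by simp_all
      then show ?thesis
        using 4 ij divs shift[of i] shift[of j] by (simp add: dims less_mult_imp_div_less)
    qed (use ij divs shift[of i] shift[of j] s in \<open>auto simp: dims\<close>)
  qed (use assms D in auto)
  finally show ?case .
qed

lemma jordan_matrix_replicate:
  "jordan_matrix (replicate r (s, a :: 'a::semiring_1)) = kron_mat (1\<^sub>m r) (jordan_block s a)"
  by (simp add: jordan_matrix_def diag_block_mat_replicate[OF jordan_block_carrier])

lemma index_jordan_matrix_replicate_1:
  assumes "l < r * s" and "c < r * s"
  shows "jordan_matrix (replicate r (s, 1::'a::semiring_1)) $$ (l, c) =
    (if l = c then 1 else 0) + (if Suc l = c \<and> c mod s \<noteq> 0 then 1 else 0)"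
proof -
  have s: "0 < s"
    using assms(1) by (cases s) auto
  have "l = c \<longleftrightarrow> l div s = c div s \<and> l mod s = c mod s"
    by (metis div_mult_mod_eq)
  with div_eq_and_Suc_mod_eq_iff[OF s, of l c]
    div_mod_less_if_less_mult[OF assms(1)] div_mod_less_if_less_mult[OF assms(2)]
  show ?thesis
    using assms by (auto simp: jordan_matrix_replicate)
qed

lemma mult_jordan_matrix_replicate_1_index:
  fixes M :: "'a::semiring_1 mat"
  assumes "M \<in> carrier_mat n (r * s)" and "i < n" and "c < r * s"
  shows "(M * jordan_matrix (replicate r (s, 1))) $$ (i, c) =
    M $$ (i, c) + (if c mod s \<noteq> 0 then M $$ (i, c - 1) else 0)"
proof -
  have "(M * jordan_matrix (replicate r (s, 1))) $$ (i, c) =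
      (\<Sum>l<r * s. M $$ (i, l) * jordan_matrix (replicate r (s, 1)) $$ (l, c))"
    using assms by (simp add: scalar_prod_def lessThan_atLeast0 sum_list_replicate)
  also have "\<dots> = (\<Sum>l<r * s. (if l = c then M $$ (i, l) else 0) +
      (if l = c - 1 \<and> c mod s \<noteq> 0 then M $$ (i, l) else 0))"
    using assms(3) by (intro sum.cong refl) (auto simp: index_jordan_matrix_replicate_1)
  also have "\<dots> = M $$ (i, c) + (if c mod s \<noteq> 0 then M $$ (i, c - 1) else 0)"
    using assms(3) by (simp add: sum.distrib)
  finally show ?thesis .
qed

lemma char_matrix_jordan_matrix:
  "char_matrix (jordan_matrix n_as) (e::'a::field) = jordan_matrix (map (\<lambda>(n, a). (n, a - e)) n_as)"
proof (induction n_as)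
  case Nil
  show ?case
    by (rule eq_matI) (simp_all add: char_matrix_def jordan_matrix_def)
next
  case (Cons na n_as)
  obtain n a where na: "na = (n, a)"
    by force
  have "char_matrix (jordan_matrix (na # n_as)) e = four_block_mat (char_matrix (jordan_block n a) e)
      (0\<^sub>m n (sum_list (map fst n_as))) (0\<^sub>m (sum_list (map fst n_as)) n)
      (char_matrix (jordan_matrix n_as) e)"
    unfolding na jordan_matrix_Cons char_matrix_def by (rule eq_matI) auto
  then show ?case
    using Cons by (simp add: na jordan_matrix_Cons char_matrix_jordan_block o_def case_prod_beta)
qed

lemma char_matrix_pow_eq_0_if_jordan_nf_replicate:
  assumes "jordan_nf (A :: 'a::field mat) (replicate r (s, a))"
  shows "char_matrix A a ^\<^sub>m s = 0\<^sub>m (r * s) (r * s)"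
proof -
  obtain P Q where wit: "similar_mat_wit A (jordan_matrix (replicate r (s, a))) P Q"
    using assms unfolding jordan_nf_def similar_mat_def by blast
  have "jordan_matrix (replicate r (s, a)) \<in> carrier_mat (r * s) (r * s)"
    using jordan_matrix_carrier[of "replicate r (s, a)"] by (simp add: sum_list_replicate)
  from similar_mat_witD2[OF this similar_mat_wit_sym[OF wit]]
  have PQ: "P \<in> carrier_mat (r * s) (r * s)" "Q \<in> carrier_mat (r * s) (r * s)"
    by auto
  have "jordan_block s (0::'a) ^\<^sub>m s = 0\<^sub>m s s"
    by (rule eq_matI) (auto simp: jordan_block_zero_pow)
  then have "char_matrix (jordan_matrix (replicate r (s, a))) a ^\<^sub>m s = kron_mat (1\<^sub>m r) (0\<^sub>m s s)"
    by (simp add: char_matrix_jordan_matrix jordan_matrix_pow diag_block_mat_replicate[OF zero_carrier_mat])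
  also have "\<dots> = 0\<^sub>m (r * s) (r * s)"
    by (cases "s = 0") auto
  moreover have
    "char_matrix A a ^\<^sub>m s = P * char_matrix (jordan_matrix (replicate r (s, a))) a ^\<^sub>m s * Q"
    by (rule similar_mat_wit_pow_id[OF similar_mat_wit_char_matrix[OF wit]])
  ultimately show ?thesis
    using PQ by (metis left_mult_zero_mat right_mult_zero_mat)
qed

section \<open>The polynomial model of the Kronecker product of Jordan blocks\<close>

text \<open>The polynomial (1 + x)(1 + y) - 1, with x the inner and y the outer variable.\<close>

definition kron_nil_poly :: "'a::comm_ring_1 poly poly" where
  "kron_nil_poly = [:[:0, 1:], [:1, 1:]:]"

lemma kron_nil_poly_power:
  "(kron_nil_poly :: 'a::comm_ring_1 poly poly) ^ j =
     (\<Sum>k\<le>j. monom (of_nat (j choose k) * monom 1 (j - k) * [:1, 1:] ^ k) k)"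
proof -
  have "(kron_nil_poly :: 'a poly poly) ^ j = (monom [:1, 1:] 1 + [:monom 1 1:]) ^ j"
    unfolding kron_nil_poly_def by (simp add: monom_Suc monom_0 flip: pCons_one)
  also have "\<dots> = (\<Sum>k\<le>j. of_nat (j choose k) * monom [:1, 1:] 1 ^ k * [:monom 1 1:] ^ (j - k))"
    by (rule binomial_ring)
  also have "\<dots> = (\<Sum>k\<le>j. monom (of_nat (j choose k) * monom 1 (j - k) * [:1, 1:] ^ k) k)"
  proof (intro sum.cong refl)
    fix k
    have "[:monom 1 1:] ^ (j - k) = [:monom (1::'a) (j - k):]"
      by (simp add: poly_const_pow monom_power)
    moreover have "(of_nat c :: 'a poly poly) * monom a k * [:d:] = monom (of_nat c * d * a) k" for c a d k
      by (simp add: of_nat_poly[where 'a="'a poly"] smult_monom mult.commute[of _ "[:_:]"] mult.commute)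
    ultimately show "of_nat (j choose k) * monom [:1, 1:] 1 ^ k * [:monom 1 1:] ^ (j - k) =
        (monom (of_nat (j choose k) * monom 1 (j - k) * [:1, 1:] ^ k) k :: 'a poly poly)"
      by (simp add: monom_power mult.commute mult.left_commute)
  qed
  finally show ?thesis .
qed

lemma coeff_kron_nil_poly_power_mult_monom:
  "coeff (coeff ((kron_nil_poly :: 'a::comm_ring_1 poly poly) ^ j * [:monom 1 e:]) g) f =
     (if g \<le> j \<and> j - g + e \<le> f then of_nat ((j choose g) * (g choose (f - (j - g + e)))) else 0)"
proof (cases "g \<le> j")
  case True
  have "coeff ((kron_nil_poly :: 'a poly poly) ^ j * [:monom 1 e:]) g =
      monom 1 e * (of_nat (j choose g) * monom 1 (j - g) * [:1, 1:] ^ g)"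
    using True by (simp add: kron_nil_poly_power coeff_sum)
  also have "\<dots> = [:1, 1:] ^ g * (monom 1 e * monom (of_nat (j choose g)) (j - g))"
    by (simp add: of_nat_poly smult_monom mult.commute mult.left_commute flip: smult_one)
  also have "\<dots> = [:1, 1:] ^ g * monom (of_nat (j choose g)) (j - g + e)"
    by (simp add: mult_monom add.commute)
  finally show ?thesis
    using True by (simp add: coeff_monom_mult coeff_one_plus_X_power mult.commute[of "[:1, 1:] ^ _"])
next
  case False
  then show ?thesis
    by (simp add: kron_nil_poly_power coeff_sum)
qed

lemma coeff_kron_nil_poly_power_mult_monom_eq_0:
  fixes r s :: nat
  assumes "prime CHAR('a::comm_ring_1)" and "CHAR('a) ^ (LEAST m. r \<le> CHAR('a) ^ m) dvd s"
    and "g < s" and "f < r"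
  shows "coeff (coeff ((kron_nil_poly :: 'a poly poly) ^ s * [:monom 1 e:]) g) f = 0"
proof (cases "s - g + e \<le> f")
  case True
  have "CHAR('a) dvd s choose (s - g)"
    using assms True le_prime_power_Least[OF assms(1), of r]
    by (intro prime_dvd_binomial_if_prime_power_dvd) auto
  then have "(of_nat (s choose g) :: 'a) = 0"
    using assms(3) by (simp add: binomial_symmetric[symmetric] of_nat_eq_0_iff_char_dvd)
  then show ?thesis
    by (subst coeff_kron_nil_poly_power_mult_monom) simp
next
  case False
  then show ?thesis
    by (subst coeff_kron_nil_poly_power_mult_monom) simp
qed

text \<open>
  Coordinate a * s + b is the coefficient of x^(r-1-a) y^(s-1-b); with this reversed indexing
  J_r \<otimes> J_s acts as multiplication by (1 + x)(1 + y).
\<close>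

definition poly_vec :: "nat \<Rightarrow> nat \<Rightarrow> 'a::comm_ring_1 poly poly \<Rightarrow> 'a vec" where
  "poly_vec r s P = vec (r * s) (\<lambda>i. coeff (coeff P (s - 1 - i mod s)) (r - 1 - i div s))"

lemma dim_poly_vec [simp]: "dim_vec (poly_vec r s P) = r * s"
  by (simp add: poly_vec_def)

lemma poly_vec_carrier [simp]: "poly_vec r s P \<in> carrier_vec (r * s)"
  by (rule carrier_vecI) simp

lemma index_poly_vec:
  "i < r * s \<Longrightarrow> poly_vec r s P $ i = coeff (coeff P (s - 1 - i mod s)) (r - 1 - i div s)"
  by (simp add: poly_vec_def)

lemma poly_vec_add: "poly_vec r s (P + Q) = poly_vec r s P + poly_vec r s Q"
  by (rule eq_vecI) (simp_all add: poly_vec_def)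

lemma poly_vec_eq_0_iff:
  "poly_vec r s P = 0\<^sub>v (r * s) \<longleftrightarrow> (\<forall>g<s. \<forall>f<r. coeff (coeff P g) f = 0)"
proof
  assume P: "poly_vec r s P = 0\<^sub>v (r * s)"
  show "\<forall>g<s. \<forall>f<r. coeff (coeff P g) f = 0"
  proof (intro allI impI)
    fix g f assume g: "g < s" and f: "f < r"
    define b where "b = s - 1 - g"
    define i where "i = (r - 1 - f) * s + b"
    have b: "b < s"
      using g by (simp add: b_def)
    with f have "i < r * s"
      unfolding i_def by (intro mult_add_less_mult) simp_all
    moreover have "i div s = r - 1 - f" "i mod s = s - 1 - g"
      using b by (simp_all add: i_def b_def)
    moreover have "poly_vec r s P $ i = 0"
      using P \<open>i < r * s\<close> by simp
    ultimately show "coeff (coeff P g) f = 0"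
      using f g by (simp add: poly_vec_def)
  qed
next
  assume "\<forall>g<s. \<forall>f<r. coeff (coeff P g) f = 0"
  show "poly_vec r s P = 0\<^sub>v (r * s)"
  proof (rule eq_vecI)
    fix i assume "i < dim_vec (0\<^sub>v (r * s) :: 'a vec)"
    then have i: "i < r * s"
      by simp
    with div_mod_less_if_less_mult[OF i] show "poly_vec r s P $ i = 0\<^sub>v (r * s) $ i"
      using \<open>\<forall>g<s. \<forall>f<r. coeff (coeff P g) f = 0\<close> by (simp add: poly_vec_def)
  qed simp
qed

abbreviation kron_jordan :: "nat \<Rightarrow> nat \<Rightarrow> 'a::comm_ring_1 mat" where
  "kron_jordan r s \<equiv> kron_mat (jordan_block r 1) (jordan_block s 1)"

lemma kron_jordan_mult_poly_vec:
  "kron_jordan r s *\<^sub>v poly_vec r s P = poly_vec r s ((kron_nil_poly + 1) * P)"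
proof (rule eq_vecI)
  fix i assume "i < dim_vec (poly_vec r s ((kron_nil_poly + 1) * P))"
  then have i: "i < r * s"
    by (simp add: poly_vec_def)
  define a b where "a = i div s" and "b = i mod s"
  have ab: "a < r" "b < s" "i = a * s + b"
    using div_mod_less_if_less_mult[OF i] by (simp_all add: a_def b_def)
  define F where "F a' b' = coeff (coeff P (s - 1 - b')) (r - 1 - a')" for a' b'
  define g f where "g = s - 1 - b" and "f = r - 1 - a"
  have "(kron_jordan r s *\<^sub>v poly_vec r s P) $ i =
      (\<Sum>a'<r. jordan_block r 1 $$ (a, a') * (\<Sum>b'<s. jordan_block s 1 $$ (b, b') * F a' b'))"
    unfolding ab(3) poly_vec_def F_def by (rule kron_mat_mult_vec_index) (use ab in auto)
  also have "\<dots> = F a b + (if Suc b < s then F a (Suc b) else 0) +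
      (if Suc a < r then F (Suc a) b + (if Suc b < s then F (Suc a) (Suc b) else 0) else 0)"
    by (simp only: jordan_block_1_row_sum[OF ab(2)] jordan_block_1_row_sum[OF ab(1)])
  also have "\<dots> = coeff (coeff ((kron_nil_poly + 1) * P) g) f"
  proof -
    have "(kron_nil_poly + 1) * P = Polynomial.smult [:1, 1:] ([:1, 1:] * P)"
      by (simp add: kron_nil_poly_def one_pCons smult_add_right)
    then have "coeff ((kron_nil_poly + 1) * P) g =
        [:1, 1:] * (coeff P g + (if g = 0 then 0 else coeff P (g - 1)))"
      by (simp only: coeff_smult coeff_one_plus_X_mult)
    moreover have "Suc b < s \<longleftrightarrow> g \<noteq> 0" "Suc a < r \<longleftrightarrow> f \<noteq> 0"
      "s - 1 - Suc b = g - 1" "r - 1 - Suc a = f - 1"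
      using ab by (auto simp: g_def f_def)
    ultimately show ?thesis
      unfolding coeff_one_plus_X_mult F_def g_def[symmetric] f_def[symmetric]
      by (simp add: algebra_simps coeff_pCons split: nat.split)
  qed
  also have "\<dots> = poly_vec r s ((kron_nil_poly + 1) * P) $ i"
    using i by (simp add: poly_vec_def a_def b_def g_def f_def)
  finally show "(kron_jordan r s *\<^sub>v poly_vec r s P) $ i = poly_vec r s ((kron_nil_poly + 1) * P) $ i" .
qed (simp add: poly_vec_def kron_mat_def)

lemma char_matrix_kron_jordan_mult_poly_vec:
  "char_matrix (kron_jordan r s) (1::'a::field) *\<^sub>v poly_vec r s P = poly_vec r s (kron_nil_poly * P)"
proof -
  have "char_matrix (kron_jordan r s) (1::'a) = kron_jordan r s - 1\<^sub>m (r * s)"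
    by (rule eq_matI) (simp_all add: char_matrix_def kron_mat_def)
  then have "char_matrix (kron_jordan r s) (1::'a) *\<^sub>v poly_vec r s P =
      kron_jordan r s *\<^sub>v poly_vec r s P - poly_vec r s P"
    by (simp add: minus_mult_distrib_mat_vec[of _ "r * s" "r * s"])
  then show ?thesis
    by (intro eq_vecI) (simp_all add: kron_jordan_mult_poly_vec distrib_right poly_vec_add)
qed

lemma char_matrix_kron_jordan_pow_mult_poly_vec:
  "(char_matrix (kron_jordan r s) (1::'a::field) ^\<^sub>m k) *\<^sub>v poly_vec r s P =
    poly_vec r s (kron_nil_poly ^ k * P)"
proof (induction k arbitrary: P)
  case 0
  then show ?case
    by (simp add: char_matrix_def kron_mat_def)
next
  case (Suc k)
  have "char_matrix (kron_jordan r s) (1::'a) \<in> carrier_mat (r * s) (r * s)"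
    by simp
  then show ?case
    by (simp add: assoc_mult_mat_vec[of _ "r * s" "r * s" _ "r * s"]
        char_matrix_kron_jordan_mult_poly_vec Suc mult.assoc mult.commute[of kron_nil_poly])
qed

section \<open>Necessity of the divisibility condition\<close>

lemma dvd_if_jordan_nf_kron_jordan:
  assumes "prime CHAR('a::field)"
    and "jordan_nf (kron_jordan r s :: 'a mat) (replicate r (s, 1))"
  shows "CHAR('a) ^ (LEAST m. r \<le> CHAR('a) ^ m) dvd s"
proof (rule ccontr)
  assume not_dvd: "\<not> ?thesis"
  then have "s \<noteq> 0"
    by (cases s) auto
  with not_dvd obtain j u where s: "s = CHAR('a) ^ j * u" and u: "\<not> CHAR('a) dvd u"
    and r: "CHAR('a) ^ j < r"
    using prime_power_part_less_if_not_dvd[OF assms(1)] by blast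
  define q where "q = CHAR('a) ^ j"
  have q: "0 < q" "q \<le> s" "q < r"
    using assms(1) s r \<open>s \<noteq> 0\<close> by (auto simp: q_def prime_gt_0_nat)
  have "poly_vec r s ((kron_nil_poly :: 'a poly poly) ^ s * [:monom 1 0:]) =
      0\<^sub>m (r * s) (r * s) *\<^sub>v poly_vec r s [:monom 1 0:]"
    by (simp add: char_matrix_kron_jordan_pow_mult_poly_vec
        flip: char_matrix_pow_eq_0_if_jordan_nf_replicate[OF assms(2)])
  also have "\<dots> = 0\<^sub>v (r * s)"
    by (rule eq_vecI) (simp_all add: scalar_prod_def)
  finally have "coeff (coeff ((kron_nil_poly :: 'a poly poly) ^ s * [:monom 1 0:]) (s - q)) q = 0"
    using q unfolding poly_vec_eq_0_iff by simp
  then have "(of_nat (s choose q) :: 'a) = 0"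
    using q unfolding coeff_kron_nil_poly_power_mult_monom by (simp add: binomial_symmetric[symmetric])
  moreover have "s = q * u"
    using s by (simp add: q_def)
  ultimately show False
    using u by (simp add: of_nat_binomial_prime_power_mult[OF assms(1) q_def] of_nat_eq_0_iff_char_dvd)
qed

section \<open>Sufficiency: an explicit Jordan basis\<close>

text \<open>
  Column a * s + t of the change of basis is Z^(s-1-t) x^(r-1-a), so for fixed a the columns form
  a Jordan chain of N, which terminates because Z^s x^(r-1-a) vanishes in the truncation.
\<close>

definition chain_poly :: "nat \<Rightarrow> nat \<Rightarrow> nat \<Rightarrow> 'a::comm_ring_1 poly poly" where
  "chain_poly r s c = kron_nil_poly ^ (s - 1 - c mod s) * [:monom 1 (r - 1 - c div s):]"

definition chain_mat :: "nat \<Rightarrow> nat \<Rightarrow> 'a::comm_ring_1 mat" where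
  "chain_mat r s = mat (r * s) (r * s) (\<lambda>(i, c). poly_vec r s (chain_poly r s c) $ i)"

lemma dim_chain_mat [simp]: "dim_row (chain_mat r s) = r * s" "dim_col (chain_mat r s) = r * s"
  by (simp_all add: chain_mat_def)

lemma chain_mat_carrier [simp]: "chain_mat r s \<in> carrier_mat (r * s) (r * s)"
  by (simp add: chain_mat_def)

lemma index_chain_mat:
  "i < r * s \<Longrightarrow> c < r * s \<Longrightarrow>
    chain_mat r s $$ (i, c) = coeff (coeff (chain_poly r s c) (s - 1 - i mod s)) (r - 1 - i div s)"
  by (simp add: chain_mat_def poly_vec_def)

lemma col_chain_mat: "c < r * s \<Longrightarrow> col (chain_mat r s) c = poly_vec r s (chain_poly r s c)"
  by (rule eq_vecI) (simp_all add: chain_mat_def)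

lemma chain_mat_lower_eq_0:
  assumes "i < r * s" and "c < i"
  shows "chain_mat r s $$ (i, c) = 0"
proof -
  have c: "c < r * s"
    using assms by simp
  have le: "c div s \<le> i div s"
    using assms(2) by (simp add: div_le_mono)
  have block_eq: "a = a' \<and> b = b'"
    if "b < s" "b' < s" "a' \<le> a" "a < r" "s - 1 - b \<le> s - 1 - b'"
      and "s - 1 - b' - (s - 1 - b) + (r - 1 - a') \<le> r - 1 - a" for a a' b b' :: nat
  proof -
    have "b' \<le> b"
      using that(1,2,5) by linarith
    then have "s - 1 - b' - (s - 1 - b) = b - b'"
      using that(1) by simp
    with that(3,4,6) \<open>b' \<le> b\<close> show ?thesis
      by linarith
  qed
  have "\<not> (s - 1 - i mod s \<le> s - 1 - c mod s \<and>
      s - 1 - c mod s - (s - 1 - i mod s) + (r - 1 - c div s) \<le> r - 1 - i div s)"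
  proof
    assume "s - 1 - i mod s \<le> s - 1 - c mod s \<and>
      s - 1 - c mod s - (s - 1 - i mod s) + (r - 1 - c div s) \<le> r - 1 - i div s"
    with le div_mod_less_if_less_mult[OF assms(1)] div_mod_less_if_less_mult[OF c]
    have "i div s = c div s \<and> i mod s = c mod s"
      by (intro block_eq) auto
    then have "i = c"
      by (metis div_mult_mod_eq)
    with assms(2) show False
      by simp
  qed
  then show ?thesis
    unfolding index_chain_mat[OF assms(1) c] chain_poly_def coeff_kron_nil_poly_power_mult_monom
    by (rule if_not_P)
qed

lemma chain_mat_diag: "c < r * s \<Longrightarrow> chain_mat r s $$ (c, c) = 1"
  unfolding index_chain_mat chain_poly_def coeff_kron_nil_poly_power_mult_monom by simp

lemma det_chain_mat: "det (chain_mat r s :: 'a::comm_ring_1 mat) = 1"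
proof -
  have "upper_triangular (chain_mat r s :: 'a mat)"
    by (rule upper_triangularI) (simp add: chain_mat_lower_eq_0)
  then have "det (chain_mat r s :: 'a mat) = prod_list (diag_mat (chain_mat r s))"
    by (rule det_upper_triangular[OF _ chain_mat_carrier])
  also have "diag_mat (chain_mat r s :: 'a mat) = replicate (r * s) 1"
    by (rule nth_equalityI) (simp_all add: diag_mat_def chain_mat_diag)
  finally show ?thesis
    by simp
qed

lemma kron_nil_poly_mult_chain_poly:
  assumes "0 < s" and "c mod s \<noteq> 0"
  shows "kron_nil_poly * chain_poly r s c = chain_poly r s (c - 1)"
proof -
  obtain d where c: "c = Suc d"
    using assms(2) by (cases c) auto
  have "Suc (d mod s) \<noteq> s"
    using assms(2) by (auto simp: c mod_Suc)
  then have "c mod s = Suc (d mod s)" "c div s = d div s"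
    by (simp_all add: c mod_Suc div_Suc)
  moreover have "c mod s < s"
    using assms(1) by simp
  ultimately have "s - 1 - d mod s = Suc (s - 1 - c mod s)" "d div s = c div s"
    by linarith+
  then show ?thesis
    by (simp add: chain_poly_def c mult.assoc)
qed

lemma index_poly_vec_kron_nil_poly_mult_chain_poly:
  assumes "prime CHAR('a::comm_ring_1)" and "CHAR('a) ^ (LEAST m. r \<le> CHAR('a) ^ m) dvd s"
    and i: "i < r * s" and c: "c < r * s"
  shows "poly_vec r s (kron_nil_poly * chain_poly r s c :: 'a poly poly) $ i =
    (if c mod s \<noteq> 0 then chain_mat r s $$ (i, c - 1) else 0)"
proof -
  have s: "0 < s"
    using i by (cases s) auto
  show ?thesis
  proof (cases "c mod s = 0")
    case True
    then have start: "kron_nil_poly * chain_poly r s c =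
        (kron_nil_poly ^ s * [:monom 1 (r - 1 - c div s):] :: 'a poly poly)"
      using s by (simp add: chain_poly_def mult.assoc flip: power_Suc)
    have "poly_vec r s (kron_nil_poly * chain_poly r s c :: 'a poly poly) $ i =
        coeff (coeff (kron_nil_poly ^ s * [:monom 1 (r - 1 - c div s):]) (s - 1 - i mod s)) (r - 1 - i div s)"
      by (simp only: index_poly_vec[OF i] start)
    also have "\<dots> = 0"
      using div_mod_less_if_less_mult[OF i] s
      by (intro coeff_kron_nil_poly_power_mult_monom_eq_0[OF assms(1,2)]) auto
    finally show ?thesis
      using True by simp
  next
    case False
    then show ?thesis
      using i c by (simp add: kron_nil_poly_mult_chain_poly[OF s] index_chain_mat index_poly_vec)
  qed
qed

lemma kron_jordan_mult_chain_mat: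
  assumes "prime CHAR('a::comm_ring_1)" and "CHAR('a) ^ (LEAST m. r \<le> CHAR('a) ^ m) dvd s"
  shows "kron_jordan r s * chain_mat r s = chain_mat r s * (jordan_matrix (replicate r (s, 1)) :: 'a mat)"
proof (rule eq_matI)
  fix i c assume "i < dim_row (chain_mat r s * (jordan_matrix (replicate r (s, 1)) :: 'a mat))"
    and "c < dim_col (chain_mat r s * (jordan_matrix (replicate r (s, 1)) :: 'a mat))"
  then have i: "i < r * s" and c: "c < r * s"
    by (simp_all add: sum_list_replicate)
  have "(kron_jordan r s * chain_mat r s :: 'a mat) $$ (i, c) =
      (kron_jordan r s *\<^sub>v col (chain_mat r s) c) $ i"
    using i c by simp
  also have "\<dots> = poly_vec r s (chain_poly r s c) $ i + poly_vec r s (kron_nil_poly * chain_poly r s c) $ i"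
    using i by (simp add: col_chain_mat[OF c] kron_jordan_mult_poly_vec distrib_right poly_vec_add)
  also have "\<dots> = chain_mat r s $$ (i, c) + (if c mod s \<noteq> 0 then chain_mat r s $$ (i, c - 1) else 0)"
    unfolding index_poly_vec_kron_nil_poly_mult_chain_poly[OF assms i c]
    by (simp only: index_chain_mat[OF i c] index_poly_vec[OF i])
  also have "\<dots> = (chain_mat r s * jordan_matrix (replicate r (s, 1))) $$ (i, c)"
    by (rule mult_jordan_matrix_replicate_1_index[OF chain_mat_carrier i c, symmetric])
  finally show "(kron_jordan r s * chain_mat r s) $$ (i, c) =
      (chain_mat r s * jordan_matrix (replicate r (s, 1)) :: 'a mat) $$ (i, c)" .
qed (simp_all add: sum_list_replicate)

lemma jordan_nf_kron_jordan_if_dvd: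
  assumes "prime CHAR('a::field)" and "0 < s"
    and "CHAR('a) ^ (LEAST m. r \<le> CHAR('a) ^ m) dvd s"
  shows "jordan_nf (kron_jordan r s :: 'a mat) (replicate r (s, 1))"
proof -
  let ?J = "jordan_matrix (replicate r (s, 1)) :: 'a mat"
  have J: "?J \<in> carrier_mat (r * s) (r * s)"
    using jordan_matrix_carrier[of "replicate r (s, 1::'a)"] by (simp add: sum_list_replicate)
  have "det (chain_mat r s :: 'a mat) \<noteq> 0"
    by (simp add: det_chain_mat)
  from det_non_zero_imp_unit[OF chain_mat_carrier this, unfolded Units_def, of "()"]
  obtain Q :: "'a mat" where Q: "Q \<in> carrier_mat (r * s) (r * s)"
    and QP: "Q * chain_mat r s = 1\<^sub>m (r * s)" and PQ: "chain_mat r s * Q = 1\<^sub>m (r * s)"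
    by (auto simp: ring_mat_def)
  have "kron_jordan r s = kron_jordan r s * (chain_mat r s * Q)"
    using PQ by simp
  also have "\<dots> = kron_jordan r s * chain_mat r s * Q"
    using Q by (simp add: assoc_mult_mat[of _ "r * s" "r * s" _ "r * s" _ "r * s"])
  also have "\<dots> = chain_mat r s * ?J * Q"
    by (simp only: kron_jordan_mult_chain_mat[OF assms(1,3)])
  finally have "similar_mat (kron_jordan r s) ?J"
    using J Q PQ QP by (intro similar_matI[of _ _ _ Q "r * s"]) auto
  then show ?thesis
    using assms(2) by (auto simp: jordan_nf_def)
qed

theorem proposition3:
  fixes p r s :: nat
  assumes "prime p" and "CHAR('a::field) = p" and "0 < r" and "r \<le> s"
  shows "jordan_nf (kron_mat (jordan_block r (1::'a)) (jordan_block s 1)) (replicate r (s, 1))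
         \<longleftrightarrow> p ^ (LEAST m. r \<le> p ^ m) dvd s"
proof -
  have p: "prime CHAR('a)"
    using assms(1,2) by simp
  have "0 < s"
    using assms(3,4) by simp
  then show ?thesis
    using dvd_if_jordan_nf_kron_jordan[OF p] jordan_nf_kron_jordan_if_dvd[OF p] assms(2) by blast
qed

end
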